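(* Let $S$ be an $m\times n$ Gaussian embedding, let $\{x_t\}$ be generated by a pre-conditioned first-order method $x_t=x_{t-1}+\sum_{j=0}^{t-1}\alpha_{j,t}H_S^{-1}\nabla f(x_j)$ with deterministic coefficients independent of $n$, and let $p_t\in\mathbb{R}_t^0[X]$ be the polynomial with $\Delta_t=p_t(C_S^{-1})\Delta_0$, for which $\lim_{n\to\infty}\mathbb{E}\|\Delta_t\|^2/\mathbb{E}\|\Delta_0\|^2=\int_a^b p_t^2(\lambda^{-1})\mu_\rho(\lambda)\mathrm{d}\lambda$. Setting $P_t(x)=p_t\!\left(\frac{x}{(1-\rho)^2}\right)$, we have $$\lim_{n\to\infty}\frac{\mathbb{E}\|\Delta_t\|^2}{\mathbb{E}\|\Delta_0\|^2}=(1-\rho)\int_a^b P_t^2(x)\frac{1}{x}\mu_\rho(x)\,\mathrm{d}x.$$ Consequently, if $\{\Pi_t\}$ is a family of polynomials orthogonal with respect to $\mu_\rho$ with $\deg\Pi_t=t$ and $\Pi_t(0)=1$, then $\overline{\Pi}_t(x):=\Pi_t((1-\rho)^2x)$ achieves the minimum $\mathcal{L}^*_{\mu_\rho,t}=\min_{p\in\mathbb{R}_t^0[X]}\int p^2(\lambda^{-1})\mu_\rho(\lambda)\mathrm{d}\lambda$.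
   Context: Setting: $A\in\mathbb{R}^{n\times d}$ of rank $d$, $b\in\mathbb{R}^n$, $f(x)=\frac12\|Ax-b\|^2$, $x^*=\arg\min f$, $d/n\to\gamma\in(0,1)$, $m/n\to\xi\in(\gamma,1)$, $\rho=\gamma/\xi\in(0,1)$. $U$ is the $n\times d$ matrix of left singular vectors of $A$, $H_S=A^\top S^\top SA$, $C_S=U^\top S^\top SU$, $\Delta_t=U^\top A(x_t-x^* )$. A Gaussian embedding has i.i.d. $\mathcal{N}(0,1/m)$ entries. $x_0$ random, independent of $S$, mean zero, with bounded condition number of $U^\top A\mathbb{E}[x_0x_0^\top]A^\top U+U^\top bb^\top U$. $\mu_\rho(x)=\frac{\sqrt{(b-x)_+(x-a)_+}}{2\pi\rho x}$ is the Marchenko–Pastur density with $a=(1-\sqrt\rho)^2$, $b=(1+\sqrt\rho)^2$ (here $a,b$ denote these edges, not the vector $b$). $\mathbb{R}_t^0[X]$: real polynomials of degree at most $t$ with value $1$ at $0$. *)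

theory Defs
  imports "HOL-Analysis.Analysis" "HOL-Computational_Algebra.Polynomial"
begin

definition mp_a :: "real \<Rightarrow> real" where "mp_a \<rho> = (1 - sqrt \<rho>)^2"
definition mp_b :: "real \<Rightarrow> real" where "mp_b \<rho> = (1 + sqrt \<rho>)^2"

definition mp_density :: "real \<Rightarrow> real \<Rightarrow> real" where
  "mp_density \<rho> x =
     sqrt (max 0 (mp_b \<rho> - x) * max 0 (x - mp_a \<rho>)) / (2 * pi * \<rho> * x)"

definition R0 :: "nat \<Rightarrow> real poly set" where
  "R0 t = {p. degree p \<le> t \<and> poly p 0 = 1}"

definition L_obj :: "real \<Rightarrow> real poly \<Rightarrow> real" where
  "L_obj \<rho> p = integral {mp_a \<rho>..mp_b \<rho>} (\<lambda>l. (poly p (1 / l))^2 * mp_density \<rho> l)"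

definition L_star :: "real \<Rightarrow> nat \<Rightarrow> real" where
  "L_star \<rho> t = Inf (L_obj \<rho> ` R0 t)"

end

theory Submission
  imports Defs
begin

text \<open>
  The inversion \<open>x \<mapsto> a b / x\<close> maps the Marchenko-Pastur support \<open>[a, b]\<close> onto itself, and
  since \<open>a b = (1 - \<rho>)\<^sup>2\<close> it transforms \<open>\<mu>\<^sub>\<rho>(\<lambda>) d\<lambda>\<close> into \<open>(1 - \<rho>) x\<^sup>-\<^sup>1 \<mu>\<^sub>\<rho>(x) dx\<close>. This
  turns the objective \<open>\<integral> p(\<lambda>\<^sup>-\<^sup>1)\<^sup>2 d\<mu>\<^sub>\<rho>\<close> into a weighted norm \<open>\<integral> P(x)\<^sup>2 x\<^sup>-\<^sup>1 d\<mu>\<^sub>\<rho>\<close> of the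
  rescaled polynomial. Writing a competitor \<open>P\<close> with \<open>P(0) = 1\<close> as \<open>\<Pi>\<^sub>t + X S\<close> with
  \<open>deg S < t\<close>, the cross term \<open>2 \<integral> \<Pi>\<^sub>t S d\<mu>\<^sub>\<rho>\<close> vanishes by orthogonality and
  \<open>\<integral> x S(x)\<^sup>2 d\<mu>\<^sub>\<rho> \<ge> 0\<close>, so \<open>\<Pi>\<^sub>t\<close> minimises that norm.
\<close>

lemma integral_reciprocal_substitution:
  fixes f :: "real \<Rightarrow> real"
  assumes "0 < a" "a \<le> b" and f: "continuous_on {a..b} f"
  shows "integral {a..b} f = integral {a..b} (\<lambda>x. a * b / x\<^sup>2 * f (a * b / x))"
proof -
  define g where "g x = a * b / x" for x
  have maps_to: "g ` {a..b} \<subseteq> {a..b}"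
  proof
    fix y assume "y \<in> g ` {a..b}"
    then obtain x where x: "a \<le> x" "x \<le> b" "y = a * b / x" by (auto simp: g_def)
    have "0 < x" using x assms by linarith
    have "a * x \<le> a * b" "b * a \<le> b * x"
      using x assms by (auto intro: mult_left_mono)
    then have "a \<le> a * b / x" "a * b / x \<le> b"
      using \<open>0 < x\<close> by (simp_all add: le_divide_eq divide_le_eq mult.commute)
    then show "y \<in> {a..b}"
      using x by simp
  qed
  have g_cont: "continuous_on {a..b} g"
    unfolding g_def using assms by (intro continuous_intros) auto
  have g_deriv: "(g has_field_derivative - (a * b / x\<^sup>2)) (at x within {a..b})"
    if "x \<in> {a..b} - {}" for x
    unfolding g_def using that assms
    by (auto intro!: derivative_eq_intros simp: power2_eq_square field_simps)
  have "integral {b..a} f = 0"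
    using assms(2) by (cases "a = b") auto
  moreover have "g a = b" "g b = a"
    using assms by (auto simp: g_def)
  moreover have "((\<lambda>x. - (a * b / x\<^sup>2) *\<^sub>R f (g x)) has_integral
          integral {g a..g b} f - integral {g b..g a} f) {a..b}"
    by (rule has_integral_substitution_general[OF _ assms(2) maps_to f g_cont g_deriv]) auto
  ultimately have "((\<lambda>x. - (a * b / x\<^sup>2) *\<^sub>R f (g x)) has_integral - integral {a..b} f) {a..b}"
    by simp
  from has_integral_neg[OF this]
  have "((\<lambda>x. a * b / x\<^sup>2 * f (g x)) has_integral integral {a..b} f) {a..b}"
    by simp
  then show ?thesis
    by (simp add: g_def integral_unique)
qed

lemma mp_a_pos: "0 < \<rho> \<Longrightarrow> \<rho> < 1 \<Longrightarrow> 0 < mp_a \<rho>"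
  by (simp add: mp_a_def)

lemma mp_a_less_mp_b: "0 < \<rho> \<Longrightarrow> mp_a \<rho> < mp_b \<rho>"
  by (simp add: mp_a_def mp_b_def power2_eq_square algebra_simps)

lemma mp_a_mult_mp_b: "0 \<le> \<rho> \<Longrightarrow> mp_a \<rho> * mp_b \<rho> = (1 - \<rho>)\<^sup>2"
proof -
  assume "0 \<le> \<rho>"
  then have "mp_a \<rho> * mp_b \<rho> = (1 - (sqrt \<rho>)\<^sup>2)\<^sup>2"
    unfolding mp_a_def mp_b_def power_mult_distrib[symmetric] by (simp add: algebra_simps power2_eq_square)
  with \<open>0 \<le> \<rho>\<close> show ?thesis
    by simp
qed

lemma mp_density_nonneg: "0 < \<rho> \<Longrightarrow> 0 < x \<Longrightarrow> 0 \<le> mp_density \<rho> x"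
  by (simp add: mp_density_def)

lemma continuous_on_mp_density:
  assumes "0 < \<rho>" "\<rho> < 1"
  shows "continuous_on {mp_a \<rho>..mp_b \<rho>} (mp_density \<rho>)"
  unfolding mp_density_def[abs_def] using assms mp_a_pos[OF assms]
  by (intro continuous_intros) auto

lemma mp_density_reciprocal:
  assumes "0 < \<rho>" "\<rho> < 1" and x: "x \<in> {mp_a \<rho>..mp_b \<rho>}"
  shows "(1 - \<rho>)\<^sup>2 / x\<^sup>2 * mp_density \<rho> ((1 - \<rho>)\<^sup>2 / x) = (1 - \<rho>) * (1 / x * mp_density \<rho> x)"
proof -
  define a b c where "a = mp_a \<rho>" and "b = mp_b \<rho>" and "c = (1 - \<rho>)\<^sup>2"
  have "0 < a" "a \<le> x" "x \<le> b" "0 < c"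
    using x mp_a_pos[OF assms(1,2)] assms by (auto simp: a_def b_def c_def)
  have ab: "c = a * b"
    using mp_a_mult_mp_b assms(1) by (simp add: a_def b_def c_def)
  define s where "s = sqrt ((x - a) * (b - x))"
  have "max 0 (b - c / x) * max 0 (c / x - a) = c * ((x - a) * (b - x)) / x\<^sup>2"
    using \<open>0 < a\<close> \<open>a \<le> x\<close> \<open>x \<le> b\<close> unfolding ab
    by (simp add: field_simps power2_eq_square mult_left_mono)
  moreover have "sqrt (c * ((x - a) * (b - x)) / x\<^sup>2) = (1 - \<rho>) * s / x"
    using assms \<open>0 < a\<close> \<open>a \<le> x\<close> by (simp add: c_def s_def real_sqrt_divide real_sqrt_mult)
  ultimately have reflected: "mp_density \<rho> (c / x) = (1 - \<rho>) * s / x / (2 * pi * \<rho> * (c / x))"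
    unfolding mp_density_def a_def[symmetric] b_def[symmetric] by simp
  have direct: "mp_density \<rho> x = s / (2 * pi * \<rho> * x)"
    unfolding mp_density_def a_def[symmetric] b_def[symmetric] s_def
    using \<open>a \<le> x\<close> \<open>x \<le> b\<close> by simp
  have "c / x\<^sup>2 * ((1 - \<rho>) * s / x / (2 * pi * \<rho> * (c / x))) = (1 - \<rho>) * (1 / x * (s / (2 * pi * \<rho> * x)))"
    using \<open>0 < c\<close> \<open>0 < a\<close> \<open>a \<le> x\<close> assms(1) by (simp add: field_simps power2_eq_square)
  then show ?thesis
    unfolding c_def[symmetric] reflected direct .
qed

lemma integral_mp_density_reciprocal:
  assumes "0 < \<rho>" "\<rho> < 1" and f: "continuous_on {mp_a \<rho>..mp_b \<rho>} f"
  shows "integral {mp_a \<rho>..mp_b \<rho>} (\<lambda>l. f l * mp_density \<rho> l)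
       = (1 - \<rho>) * integral {mp_a \<rho>..mp_b \<rho>} (\<lambda>x. f ((1 - \<rho>)\<^sup>2 / x) * (1 / x) * mp_density \<rho> x)"
proof -
  have "continuous_on {mp_a \<rho>..mp_b \<rho>} (\<lambda>l. f l * mp_density \<rho> l)"
    using f continuous_on_mp_density[OF assms(1,2)] by (rule continuous_on_mult)
  then have "integral {mp_a \<rho>..mp_b \<rho>} (\<lambda>l. f l * mp_density \<rho> l)
      = integral {mp_a \<rho>..mp_b \<rho>} (\<lambda>x. (1 - \<rho>)\<^sup>2 / x\<^sup>2 * (f ((1 - \<rho>)\<^sup>2 / x) * mp_density \<rho> ((1 - \<rho>)\<^sup>2 / x)))"
    using integral_reciprocal_substitution[OF mp_a_pos[OF assms(1,2)] less_imp_le[OF mp_a_less_mp_b]]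
      mp_a_mult_mp_b assms(1) by simp
  also have "\<dots> = integral {mp_a \<rho>..mp_b \<rho>} (\<lambda>x. (1 - \<rho>) * (f ((1 - \<rho>)\<^sup>2 / x) * (1 / x) * mp_density \<rho> x))"
    using mp_density_reciprocal[OF assms(1,2)] by (intro integral_cong) (simp add: algebra_simps)
  finally show ?thesis
    by (simp only: integral_mult_right)
qed

lemma L_obj_eq_rescaled_integral:
  assumes "0 < \<rho>" "\<rho> < 1"
  shows "L_obj \<rho> p = (1 - \<rho>) * integral {mp_a \<rho>..mp_b \<rho>}
           (\<lambda>x. (poly (pcompose p [:0, 1 / (1 - \<rho>)\<^sup>2:]) x)\<^sup>2 * (1 / x) * mp_density \<rho> x)"
proof -
  have "continuous_on {mp_a \<rho>..mp_b \<rho>} (\<lambda>l. (poly p (1 / l))\<^sup>2)"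
    using mp_a_pos[OF assms] by (intro continuous_intros) auto
  from integral_mp_density_reciprocal[OF assms this]
  show ?thesis
    unfolding L_obj_def by (simp add: poly_pcompose)
qed

lemma graded_basis_spans:
  fixes Q :: "nat \<Rightarrow> 'a::field poly"
  assumes deg: "\<And>k. degree (Q k) = k" and nz: "\<And>k. Q k \<noteq> 0"
    and high: "\<And>i. n \<le> i \<Longrightarrow> coeff S i = 0" \<comment> \<open>not \<open>degree S < n\<close>, which fails for \<open>S = 0\<close>, \<open>n = 0\<close>\<close>
  shows "\<exists>c. S = (\<Sum>i<n. smult (c i) (Q i))"
  using high
proof (induction n arbitrary: S)
  case 0
  then show ?case
    by (auto intro: poly_eqI)
next
  case (Suc n)
  define k where "k = coeff S n / lead_coeff (Q n)"
  define R where "R = S - smult k (Q n)"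
  have "lead_coeff (Q n) \<noteq> 0"
    using nz[of n] by simp
  have "coeff R i = 0" if "n \<le> i" for i
  proof (cases "i = n")
    case True
    then show ?thesis
      using \<open>lead_coeff (Q n) \<noteq> 0\<close> deg[of n] by (simp add: R_def k_def)
  next
    case False
    then show ?thesis
      using that Suc.prems[of i] deg[of n] by (simp add: R_def coeff_eq_0)
  qed
  then obtain c where "R = (\<Sum>i<n. smult (c i) (Q i))"
    using Suc.IH by blast
  then have "S = (\<Sum>i<Suc n. smult ((c(n := k)) i) (Q i))"
    by (simp add: R_def algebra_simps)
  then show ?case
    by blast
qed

lemma integral_poly_orthogonal_lower_degree:
  fixes Q :: "nat \<Rightarrow> real poly"
  assumes w: "continuous_on {a..b} w"
    and orth: "\<And>s k. s \<noteq> k \<Longrightarrow> integral {a..b} (\<lambda>x. poly (Q s) x * poly (Q k) x * w x) = 0"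
    and deg: "\<And>k. degree (Q k) = k" and nz: "\<And>k. Q k \<noteq> 0"
    and "degree S < t"
  shows "integral {a..b} (\<lambda>x. poly (Q t) x * poly S x * w x) = 0"
proof -
  have "coeff S i = 0" if "t \<le> i" for i
    using that \<open>degree S < t\<close> by (simp add: coeff_eq_0)
  then obtain c where "S = (\<Sum>i<t. smult (c i) (Q i))"
    using graded_basis_spans[OF deg nz] by blast
  then have "integral {a..b} (\<lambda>x. poly (Q t) x * poly S x * w x)
      = integral {a..b} (\<lambda>x. \<Sum>i<t. c i * (poly (Q t) x * poly (Q i) x * w x))"
    by (simp add: poly_sum sum_distrib_left sum_distrib_right algebra_simps)
  also have "\<dots> = (\<Sum>i<t. c i * integral {a..b} (\<lambda>x. poly (Q t) x * poly (Q i) x * w x))"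
    using w by (simp add: integral_sum integrable_continuous_interval continuous_intros)
  also have "\<dots> = 0"
    using orth by simp
  finally show ?thesis .
qed

lemma poly_eq_add_X_mult_lower_degree:
  fixes P Q :: "'a::field poly"
  assumes "degree P \<le> t" "degree Q \<le> t" "poly P 0 = poly Q 0"
  obtains S where "P = Q + [:0, 1:] * S" and "S = 0 \<or> degree S < t"
proof -
  have "[:0, 1:] dvd P - Q"
    using assms(3) by (simp add: dvd_iff_poly_eq_0)
  then obtain S where S: "P - Q = [:0, 1:] * S"
    by (rule dvdE)
  have "degree ([:0, 1:] * S) \<le> t"
    using assms(1,2) unfolding S[symmetric] by (rule degree_diff_le)
  then have "S = 0 \<or> degree S < t"
    by (auto split: if_splits)
  with S show ?thesis
    by (intro that) (simp_all add: diff_eq_eq add.commute)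
qed

lemma orthogonal_poly_minimises_reciprocal_weighted_norm:
  fixes Q :: "nat \<Rightarrow> real poly"
  assumes "0 < a" and w: "continuous_on {a..b} w" and w_nonneg: "\<And>x. x \<in> {a..b} \<Longrightarrow> 0 \<le> w x"
    and orth: "\<And>s k. s \<noteq> k \<Longrightarrow> integral {a..b} (\<lambda>x. poly (Q s) x * poly (Q k) x * w x) = 0"
    and deg: "\<And>k. degree (Q k) = k" and one: "\<And>k. poly (Q k) 0 = 1"
    and P: "degree P \<le> t" "poly P 0 = 1"
  shows "integral {a..b} (\<lambda>x. (poly (Q t) x)\<^sup>2 * (1 / x) * w x)
       \<le> integral {a..b} (\<lambda>x. (poly P x)\<^sup>2 * (1 / x) * w x)"
proof -
  obtain S where S: "P = Q t + [:0, 1:] * S" and "S = 0 \<or> degree S < t"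
    using poly_eq_add_X_mult_lower_degree[of P t "Q t"] P deg[of t] one[of t] by auto
  have "Q k \<noteq> 0" for k
    using one[of k] by auto
  then have cross: "integral {a..b} (\<lambda>x. poly (Q t) x * poly S x * w x) = 0"
    using integral_poly_orthogonal_lower_degree[OF w orth deg] \<open>S = 0 \<or> degree S < t\<close> by auto
  have expand: "(poly P x)\<^sup>2 * (1 / x) * w x = (poly (Q t) x)\<^sup>2 * (1 / x) * w x
      + 2 * (poly (Q t) x * poly S x * w x) + x * (poly S x)\<^sup>2 * w x"
    if "x \<in> {a..b}" for x
    using that \<open>0 < a\<close> by (simp add: S power2_eq_square field_simps)
  have "(\<lambda>x. (poly (Q t) x)\<^sup>2 * (1 / x) * w x) integrable_on {a..b}"
    "(\<lambda>x. 2 * (poly (Q t) x * poly S x * w x)) integrable_on {a..b}"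
    "(\<lambda>x. x * (poly S x)\<^sup>2 * w x) integrable_on {a..b}"
    using \<open>0 < a\<close> w by (auto intro!: integrable_continuous_interval continuous_intros)
  moreover have "integral {a..b} (\<lambda>x. (poly P x)\<^sup>2 * (1 / x) * w x)
      = integral {a..b} (\<lambda>x. (poly (Q t) x)\<^sup>2 * (1 / x) * w x
          + 2 * (poly (Q t) x * poly S x * w x) + x * (poly S x)\<^sup>2 * w x)"
    using expand by (rule integral_cong)
  ultimately have "integral {a..b} (\<lambda>x. (poly P x)\<^sup>2 * (1 / x) * w x)
      = integral {a..b} (\<lambda>x. (poly (Q t) x)\<^sup>2 * (1 / x) * w x)
      + 2 * integral {a..b} (\<lambda>x. poly (Q t) x * poly S x * w x)
      + integral {a..b} (\<lambda>x. x * (poly S x)\<^sup>2 * w x)"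
    by (simp add: integral_add integrable_add del: mult_2)
  moreover have "0 \<le> integral {a..b} (\<lambda>x. x * (poly S x)\<^sup>2 * w x)"
    using \<open>0 < a\<close> w w_nonneg
    by (intro Henstock_Kurzweil_Integration.integral_nonneg integrable_continuous_interval continuous_intros) auto
  ultimately show ?thesis
    using cross by simp
qed

lemma pcompose_scale_in_R0:
  assumes "p \<in> R0 t"
  shows "pcompose p [:0, c:] \<in> R0 t"
proof -
  have "degree (pcompose p [:0, c:]) \<le> degree p * degree [:0, c:]"
    by (rule degree_pcompose_le)
  also have "\<dots> \<le> degree p"
    using mult_le_mono2[of "degree [:0, c:]" 1 "degree p"] by simp
  finally show ?thesis
    using assms by (simp add: R0_def poly_pcompose)
qed

theorem lemma3:
  fixes \<rho> :: real
  assumes "0 < \<rho>" and "\<rho> < 1"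
  shows
    "(\<forall>(t::nat) (p::real poly) (r::nat \<Rightarrow> real).
        p \<in> R0 t \<longrightarrow> r \<longlonglongrightarrow> L_obj \<rho> p \<longrightarrow>
        r \<longlonglongrightarrow> (1 - \<rho>) * integral {mp_a \<rho>..mp_b \<rho>}
              (\<lambda>x. (poly (pcompose p [:0, 1 / (1 - \<rho>)^2:]) x)^2 * (1 / x) * mp_density \<rho> x))
     \<and>
     (\<forall>Q :: nat \<Rightarrow> real poly.
        (\<forall>s k. s \<noteq> k \<longrightarrow>
           integral {mp_a \<rho>..mp_b \<rho>} (\<lambda>x. poly (Q s) x * poly (Q k) x * mp_density \<rho> x) = 0)
        \<longrightarrow> (\<forall>k. degree (Q k) = k)
        \<longrightarrow> (\<forall>k. poly (Q k) 0 = 1)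
        \<longrightarrow> (\<forall>t. pcompose (Q t) [:0, (1 - \<rho>)^2:] \<in> R0 t
                 \<and> L_obj \<rho> (pcompose (Q t) [:0, (1 - \<rho>)^2:]) = L_star \<rho> t))"
proof (intro conjI allI impI)
  fix t :: nat and p :: "real poly" and r :: "nat \<Rightarrow> real"
  assume "r \<longlonglongrightarrow> L_obj \<rho> p"
  then show "r \<longlonglongrightarrow> (1 - \<rho>) * integral {mp_a \<rho>..mp_b \<rho>}
              (\<lambda>x. (poly (pcompose p [:0, 1 / (1 - \<rho>)^2:]) x)^2 * (1 / x) * mp_density \<rho> x)"
    by (simp only: L_obj_eq_rescaled_integral[OF assms])
next
  fix Q :: "nat \<Rightarrow> real poly" and t :: nat
  assume orth: "\<forall>s k. s \<noteq> k \<longrightarrow>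
           integral {mp_a \<rho>..mp_b \<rho>} (\<lambda>x. poly (Q s) x * poly (Q k) x * mp_density \<rho> x) = 0"
    and deg: "\<forall>k. degree (Q k) = k" and one: "\<forall>k. poly (Q k) 0 = 1"
  define c where "c = (1 - \<rho>)\<^sup>2"
  have "c \<noteq> 0"
    using assms by (simp add: c_def)
  define J where "J P = integral {mp_a \<rho>..mp_b \<rho>} (\<lambda>x. (poly P x)\<^sup>2 * (1 / x) * mp_density \<rho> x)" for P
  have L_obj_J: "L_obj \<rho> q = (1 - \<rho>) * J (pcompose q [:0, 1 / c:])" for q
    unfolding J_def c_def by (rule L_obj_eq_rescaled_integral[OF assms])
  have J_minimal: "J (Q t) \<le> J P" if "P \<in> R0 t" for P
    using that orthogonal_poly_minimises_reciprocal_weighted_norm[OF mp_a_pos[OF assms]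
        continuous_on_mp_density[OF assms] mp_density_nonneg orth[rule_format] deg[rule_format]
        one[rule_format]] mp_a_pos[OF assms] assms(1)
    by (auto simp: J_def R0_def)
  show "pcompose (Q t) [:0, (1 - \<rho>)^2:] \<in> R0 t"
    using deg one by (intro pcompose_scale_in_R0) (simp add: R0_def)
  have "L_obj \<rho> (pcompose (Q t) [:0, c:]) \<le> L_obj \<rho> q" if "q \<in> R0 t" for q
  proof -
    have "pcompose (pcompose (Q t) [:0, c:]) [:0, 1 / c:] = Q t"
      using \<open>c \<noteq> 0\<close> by (simp add: pcompose_assoc[symmetric] pcompose_pCons)
    then show ?thesis
      using J_minimal[OF pcompose_scale_in_R0[OF that]] assms unfolding L_obj_J by simp
  qed
  then show "L_obj \<rho> (pcompose (Q t) [:0, (1 - \<rho>)^2:]) = L_star \<rho> t"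
    unfolding L_star_def c_def using \<open>pcompose (Q t) [:0, (1 - \<rho>)^2:] \<in> R0 t\<close>
    by (intro cInf_eq_minimum[symmetric]) auto
qed

end
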